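(* Let $N\ge2$ and $\nu_1,\dots,\nu_N\in\mathcal{M}_h\cap\Delta$. Let $\boldsymbol{\sigma}=(\boldsymbol{\sigma}_1,\dots,\boldsymbol{\sigma}_N)\in\mathcal{S}_h^N$ and $\nu\in\mathcal{M}_h\cap\Delta$. Then each equation $-\Delta_h\xi_i'=\mathrm{div}_h\boldsymbol{\sigma}_i+\nu_i-\nu$ ($i=1,\dots,N$) admits a solution, and for any choice of such solutions $\xi_1',\dots,\xi_N'$, the Euclidean projection $(\widetilde{\boldsymbol{\sigma}},\widetilde\nu)$ of $(\boldsymbol{\sigma},\nu)$ onto $$\mathcal{F}_h=\{(\boldsymbol{\sigma}_1,\dots,\boldsymbol{\sigma}_N,\mu)\in\mathcal{S}_h^N\times\mathcal{M}_h:\mathrm{div}_h\boldsymbol{\sigma}_k+\nu_k=\mu\ \forall k\}$$ is given by $\widetilde{\boldsymbol{\sigma}}_i=\boldsymbol{\sigma}_i+\nabla_h\xi_i$ and $\widetilde\nu=\nu+\xi_1+\dots+\xi_N$, where $\xi_i=\xi_i'-(I-\tfrac1N\Delta_h)^{-1}\big(\tfrac1N\sum_{j=1}^N\xi_j'\big)$.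
   Context: Grid $\mathcal{G}_h=\{hi:i=1,\dots,p\}^2$ with $h=1/p$; $\mathcal{M}_h=\{\mu:\mathcal{G}_h\to\mathbb{R}\}\cong\mathbb{R}^{p^2}$, $\mathcal{S}_h=\{\boldsymbol{\sigma}:\mathcal{G}_h\to\mathbb{R}^2\}\cong\mathbb{R}^{p^2\times2}$, both with the standard $\ell^2$ inner products (and the product inner product on $\mathcal{S}_h^N\times\mathcal{M}_h$, with respect to which the projection is taken). $\Delta\subset\mathcal{M}_h$ is the unit simplex (nonnegative entries summing to 1). $\nabla_h:\mathcal{M}_h\to\mathcal{S}_h$ is the discrete gradient by forward differences with homogeneous Neumann boundary conditions: $(\nabla_hu)_{i,j}=(u_{i+1,j}-u_{i,j},\,u_{i,j+1}-u_{i,j})$, where a difference is set to $0$ when $i=p$ (resp. $j=p$); its kernel is the constants. $\mathrm{div}_h=-\nabla_h^*$ and $\Delta_h=\mathrm{div}_h\nabla_h$. *)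

theory Defs
  imports "HOL-Analysis.Analysis"
begin

text \<open>Grid G_h = {1..p} x {1..p}. Mesh functions are functions on nat x nat that vanish
  off the grid (so M_h is identified with R^(p^2), S_h with R^(p^2 x 2)).\<close>

definition grid :: "nat \<Rightarrow> (nat \<times> nat) set" where
  "grid p = {1..p} \<times> {1..p}"

definition meshM :: "nat \<Rightarrow> (nat \<times> nat \<Rightarrow> real) set" where
  "meshM p = {u. \<forall>x. x \<notin> grid p \<longrightarrow> u x = 0}"

definition meshS :: "nat \<Rightarrow> (nat \<times> nat \<Rightarrow> real \<times> real) set" where
  "meshS p = {s. \<forall>x. x \<notin> grid p \<longrightarrow> s x = 0}"

definition ipM :: "nat \<Rightarrow> (nat \<times> nat \<Rightarrow> real) \<Rightarrow> (nat \<times> nat \<Rightarrow> real) \<Rightarrow> real" where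
  "ipM p u v = (\<Sum>x\<in>grid p. u x * v x)"

definition ipS :: "nat \<Rightarrow> (nat \<times> nat \<Rightarrow> real \<times> real) \<Rightarrow> (nat \<times> nat \<Rightarrow> real \<times> real) \<Rightarrow> real" where
  "ipS p s t = (\<Sum>x\<in>grid p. fst (s x) * fst (t x) + snd (s x) * snd (t x))"

text \<open>Forward-difference gradient with homogeneous Neumann boundary conditions.\<close>
definition grad_h :: "nat \<Rightarrow> (nat \<times> nat \<Rightarrow> real) \<Rightarrow> (nat \<times> nat \<Rightarrow> real \<times> real)" where
  "grad_h p u = (\<lambda>(i, j). if (i, j) \<in> grid p then
      ((if i < p then u (i + 1, j) - u (i, j) else 0),
       (if j < p then u (i, j + 1) - u (i, j) else 0))
    else (0, 0))"

text \<open>div_h = - grad_h^*, written out explicitly (adjoint w.r.t. the l2 inner products).\<close>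
definition div_h :: "nat \<Rightarrow> (nat \<times> nat \<Rightarrow> real \<times> real) \<Rightarrow> (nat \<times> nat \<Rightarrow> real)" where
  "div_h p s = (\<lambda>(i, j). if (i, j) \<in> grid p then
      (if i < p then fst (s (i, j)) else 0) - (if 1 < i then fst (s (i - 1, j)) else 0)
    + (if j < p then snd (s (i, j)) else 0) - (if 1 < j then snd (s (i, j - 1)) else 0)
    else 0)"

definition lap_h :: "nat \<Rightarrow> (nat \<times> nat \<Rightarrow> real) \<Rightarrow> (nat \<times> nat \<Rightarrow> real)" where
  "lap_h p u = div_h p (grad_h p u)"

definition unit_simplex :: "nat \<Rightarrow> (nat \<times> nat \<Rightarrow> real) set" where
  "unit_simplex p = {u \<in> meshM p. (\<forall>x\<in>grid p. 0 \<le> u x) \<and> (\<Sum>x\<in>grid p. u x) = 1}"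

definition resolv :: "nat \<Rightarrow> nat \<Rightarrow> (nat \<times> nat \<Rightarrow> real) \<Rightarrow> (nat \<times> nat \<Rightarrow> real)" where
  "resolv p N f = (THE w. w \<in> meshM p \<and> (\<lambda>x. w x - lap_h p w x / real N) = f)"

definition Fh :: "nat \<Rightarrow> nat \<Rightarrow> (nat \<Rightarrow> nat \<times> nat \<Rightarrow> real)
    \<Rightarrow> ((nat \<Rightarrow> nat \<times> nat \<Rightarrow> real \<times> real) \<times> (nat \<times> nat \<Rightarrow> real)) set" where
  "Fh p N nus = {(s, mu). (\<forall>k\<in>{1..N}. s k \<in> meshS p) \<and> mu \<in> meshM p \<and>
      (\<forall>k\<in>{1..N}. (\<lambda>x. div_h p (s k) x + nus k x) = mu)}"

definition dist2 :: "nat \<Rightarrow> nat \<Rightarrow> (nat \<Rightarrow> nat \<times> nat \<Rightarrow> real \<times> real) \<times> (nat \<times> nat \<Rightarrow> real)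
    \<Rightarrow> (nat \<Rightarrow> nat \<times> nat \<Rightarrow> real \<times> real) \<times> (nat \<times> nat \<Rightarrow> real) \<Rightarrow> real" where
  "dist2 p N a b = (\<Sum>k=1..N. ipS p (fst a k - fst b k) (fst a k - fst b k))
      + ipM p (snd a - snd b) (snd a - snd b)"

definition is_proj :: "nat \<Rightarrow> nat \<Rightarrow> ((nat \<Rightarrow> nat \<times> nat \<Rightarrow> real \<times> real) \<times> (nat \<times> nat \<Rightarrow> real)) set
    \<Rightarrow> (nat \<Rightarrow> nat \<times> nat \<Rightarrow> real \<times> real) \<times> (nat \<times> nat \<Rightarrow> real)
    \<Rightarrow> (nat \<Rightarrow> nat \<times> nat \<Rightarrow> real \<times> real) \<times> (nat \<times> nat \<Rightarrow> real) \<Rightarrow> bool" where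
  "is_proj p N C a y \<longleftrightarrow> y \<in> C \<and> (\<forall>z\<in>C. dist2 p N a y \<le> dist2 p N a z)"

end

theory Submission
  imports Defs "HOL-Library.Function_Algebras"
begin

(* Summation by parts gives div_h = - grad_h^*, so - Delta_h is positive semidefinite with
   kernel the constants and I - Delta_h / N is positive definite.  In finite dimension this makes
   the resolvent well defined and the Poisson equation - Delta_h u = g solvable whenever g has
   zero sum, as div_h sigma_i + nu_i - nu has.  Writing W for the resolvent applied to the mean of
   the xi'_j, its defining equation says sum_j xi_j = - Delta_h W, which puts the candidate into
   F_h.  The displacement (- grad_h xi_k, - sum_j xi_j) from the candidate to (sigma, nu) is
   orthogonal to every direction (tau, m) of F_h, i.e. div_h tau_k = m for all k, because
   <grad_h xi_k, tau_k> = - <xi_k, m>; Pythagoras then shows that the candidate is the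
   projection. *)

lemma sum_shift_pred:
  fixes f :: "nat \<Rightarrow> nat \<Rightarrow> 'a::comm_monoid_add"
  shows "(\<Sum>i=1..p. if i < p then f (i + 1) i else 0) = (\<Sum>i=1..p. if 1 < i then f i (i - 1) else 0)"
proof -
  have "(\<Sum>i=1..p. if i < p then f (i + 1) i else 0) = (\<Sum>i=1..<p. f (i + 1) i)"
    by (simp only: sum.inter_filter[symmetric] finite_atLeastAtMost) (rule sum.cong; auto)
  also have "\<dots> = (\<Sum>i=2..<p+1. f i (i - 1))"
    by (rule sum.reindex_bij_witness[of _ "\<lambda>i. i - 1" "\<lambda>i. i + 1"]) auto
  also have "\<dots> = (\<Sum>i=1..p. if 1 < i then f i (i - 1) else 0)"
    by (simp only: sum.inter_filter[symmetric] finite_atLeastAtMost) (rule sum.cong; auto)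
  finally show ?thesis .
qed

lemma sum_fun_apply: "(\<Sum>a\<in>A. f a) x = (\<Sum>a\<in>A. f a x)"
  by (induction A rule: infinite_finite_induct) auto

context vector_space
begin

lemma linear_inj_on_span_imp_surj_on_span:
  assumes lin: "Vector_Spaces.linear scale scale f" and "finite B"
    and into: "f ` span B \<subseteq> span B" and inj: "inj_on f (span B)"
  shows "f ` span B = span B"
proof -
  interpret f: Vector_Spaces.linear scale scale f by (fact lin)
  obtain C where C: "C \<subseteq> span B" "independent C" "span B \<subseteq> span C"
    by (rule maximal_independent_subset)
  then have span_C: "span C = span B"
    using span_minimal[OF C(1) subspace_span] by blast
  have "finite C"
    using independent_span_bound[OF \<open>finite B\<close> C(2,1)] by blast
  have inj_C: "inj_on f C"
    using inj C(1) by (rule inj_on_subset)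
  have "span B \<subseteq> span (f ` C)"
  proof
    fix g assume g: "g \<in> span B"
    show "g \<in> span (f ` C)"
    proof (rule ccontr)
      assume g_notin: "g \<notin> span (f ` C)"
      have "independent (f ` C)"
        using f.independent_injective_image[OF C(2)] inj span_C by simp
      then have "independent (insert g (f ` C))"
        using g_notin by (rule independent_insertI[rotated])
      moreover have "insert g (f ` C) \<subseteq> span C"
        using g into C(1) span_C by auto
      ultimately have "card (insert g (f ` C)) \<le> card C"
        using independent_span_bound[OF \<open>finite C\<close>] by blast
      moreover have "g \<notin> f ` C"
        using g_notin span_base by blast
      ultimately show False
        using \<open>finite C\<close> card_image[OF inj_C] by simp
    qed
  qed
  then show ?thesis
    using into f.span_image[of C] span_C by auto
qed

end

lemma linear_bij_betw_finite_support:
  fixes L :: "('a \<Rightarrow> real) \<Rightarrow> 'a \<Rightarrow> real" and S :: "'a set"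
  defines "V \<equiv> {u. \<forall>x. x \<notin> S \<longrightarrow> u x = 0}"
  assumes "finite S"
    and add: "\<And>u v. L (u + v) = L u + L v"
    and scale: "\<And>c u. L (\<lambda>x. c * u x) = (\<lambda>x. c * L u x)"
    and into: "L ` V \<subseteq> V"
    and ker: "\<And>u. u \<in> V \<Longrightarrow> L u = 0 \<Longrightarrow> u = 0"
  shows "bij_betw L V V"
proof -
  interpret fun_space: vector_space "\<lambda>c (u :: 'a \<Rightarrow> real) x. c * u x"
    by unfold_locales (auto simp: fun_eq_iff algebra_simps)
  have lin: "Vector_Spaces.linear (\<lambda>c u x. c * u x) (\<lambda>c u x. c * u x) L"
    by unfold_locales (simp_all add: add scale)
  then interpret L: Vector_Spaces.linear "\<lambda>c (u :: 'a \<Rightarrow> real) x. c * u x" "\<lambda>c u x. c * u x" L .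
  define B where "B = (\<lambda>s x. if x = s then 1 else 0 :: real) ` S"
  have V_span: "V = fun_space.span B"
  proof
    show "fun_space.span B \<subseteq> V"
      by (rule fun_space.span_minimal) (auto simp: B_def V_def fun_space.subspace_def)
    show "V \<subseteq> fun_space.span B"
    proof
      fix u assume "u \<in> V"
      then have "u = (\<Sum>s\<in>S. (\<lambda>x. u s * (if x = s then 1 else 0)))"
        using \<open>finite S\<close> by (auto simp: fun_eq_iff V_def sum_fun_apply if_distrib cong: if_cong)
      also have "\<dots> \<in> fun_space.span B"
        by (intro fun_space.span_sum fun_space.span_scale fun_space.span_base) (auto simp: B_def)
      finally show "u \<in> fun_space.span B" .
    qed
  qed
  have "inj_on L V"
    unfolding V_span L.inj_on_iff_eq_0[OF fun_space.subspace_span] using ker V_span by auto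
  moreover have "L ` V = V"
    using fun_space.linear_inj_on_span_imp_surj_on_span[OF lin] into \<open>inj_on L V\<close>
    unfolding V_span by (simp add: B_def \<open>finite S\<close>)
  ultimately show ?thesis
    by (simp add: bij_betw_def)
qed

lemma finite_grid [simp]: "finite (grid p)"
  by (simp add: grid_def)

lemma sum_grid: "(\<Sum>x\<in>grid p. f x) = (\<Sum>i=1..p. \<Sum>j=1..p. f (i, j))"
  unfolding grid_def by (simp add: sum.cartesian_product)

lemma grad_h_adjoint: "ipS p (grad_h p u) s = - ipM p u (div_h p s)"
proof -
  have horizontal: "(\<Sum>i=1..p. \<Sum>j=1..p. if i < p then u (i + 1, j) * fst (s (i, j)) else 0)
      = (\<Sum>i=1..p. \<Sum>j=1..p. if 1 < i then u (i, j) * fst (s (i - 1, j)) else 0)"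
  proof -
    have "(\<Sum>i=1..p. if i < p then u (i + 1, j) * fst (s (i, j)) else 0)
        = (\<Sum>i=1..p. if 1 < i then u (i, j) * fst (s (i - 1, j)) else 0)" for j
      using sum_shift_pred[of p "\<lambda>a b. u (a, j) * fst (s (b, j))"] by simp
    then show ?thesis
      by (subst (1 2) sum.swap) simp
  qed
  have vertical: "(\<Sum>i=1..p. \<Sum>j=1..p. if j < p then u (i, j + 1) * snd (s (i, j)) else 0)
      = (\<Sum>i=1..p. \<Sum>j=1..p. if 1 < j then u (i, j) * snd (s (i, j - 1)) else 0)"
  proof -
    have "(\<Sum>j=1..p. if j < p then u (i, j + 1) * snd (s (i, j)) else 0)
        = (\<Sum>j=1..p. if 1 < j then u (i, j) * snd (s (i, j - 1)) else 0)" for i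
      using sum_shift_pred[of p "\<lambda>a b. u (i, a) * snd (s (i, b))"] by simp
    then show ?thesis
      by simp
  qed
  have "ipS p (grad_h p u) s + ipM p u (div_h p s) =
      (\<Sum>i=1..p. \<Sum>j=1..p. if i < p then u (i + 1, j) * fst (s (i, j)) else 0)
    - (\<Sum>i=1..p. \<Sum>j=1..p. if 1 < i then u (i, j) * fst (s (i - 1, j)) else 0)
    + (\<Sum>i=1..p. \<Sum>j=1..p. if j < p then u (i, j + 1) * snd (s (i, j)) else 0)
    - (\<Sum>i=1..p. \<Sum>j=1..p. if 1 < j then u (i, j) * snd (s (i, j - 1)) else 0)"
    unfolding ipS_def ipM_def sum_grid sum.distrib[symmetric] sum_subtractf[symmetric]
    by (intro sum.cong refl) (auto simp: grad_h_def div_h_def grid_def algebra_simps)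
  then show ?thesis
    using horizontal vertical by simp
qed

lemma meshM_off_grid: "u \<in> meshM p \<Longrightarrow> x \<notin> grid p \<Longrightarrow> u x = 0"
  unfolding meshM_def by blast

lemma grad_h_in_meshS: "grad_h p u \<in> meshS p"
  by (auto simp: meshS_def grad_h_def zero_prod_def)

lemma div_h_in_meshM: "div_h p s \<in> meshM p"
  by (auto simp: meshM_def div_h_def)

lemma lap_h_in_meshM: "lap_h p u \<in> meshM p"
  by (simp add: lap_h_def div_h_in_meshM)

lemma div_h_add: "div_h p (s + t) = div_h p s + div_h p t"
  by (auto simp: fun_eq_iff div_h_def)

lemma div_h_diff: "div_h p (s - t) = div_h p s - div_h p t"
  by (auto simp: fun_eq_iff div_h_def)

lemma lap_h_add: "lap_h p (u + v) = lap_h p u + lap_h p v"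
  by (auto simp: fun_eq_iff lap_h_def div_h_def grad_h_def)

lemma lap_h_diff: "lap_h p (u - v) = lap_h p u - lap_h p v"
  by (auto simp: fun_eq_iff lap_h_def div_h_def grad_h_def)

lemma lap_h_scale: "lap_h p (\<lambda>x. c * u x) = (\<lambda>x. c * lap_h p u x)"
  by (auto simp: fun_eq_iff lap_h_def div_h_def grad_h_def algebra_simps)

lemma sum_div_h: "(\<Sum>x\<in>grid p. div_h p s x) = 0"
proof -
  have "grad_h p (\<lambda>_. 1) = (\<lambda>_. 0)"
    by (auto simp: fun_eq_iff grad_h_def zero_prod_def)
  then show ?thesis
    using grad_h_adjoint[of p "\<lambda>_. 1" s] by (simp add: ipS_def ipM_def)
qed

lemma sum_lap_h: "(\<Sum>x\<in>grid p. lap_h p u x) = 0"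
  unfolding lap_h_def by (rule sum_div_h)

lemma ipM_lap_h_self: "ipM p u (lap_h p u) = - ipS p (grad_h p u) (grad_h p u)"
  by (simp add: lap_h_def grad_h_adjoint)

lemma ipM_self_nonneg: "0 \<le> ipM p u u"
  unfolding ipM_def by (intro sum_nonneg) simp

lemma ipS_self_nonneg: "0 \<le> ipS p s s"
  unfolding ipS_def by (intro sum_nonneg) simp

lemma ipM_self_eq_0_iff: "ipM p u u = 0 \<longleftrightarrow> (\<forall>x\<in>grid p. u x = 0)"
  unfolding ipM_def by (subst sum_nonneg_eq_0_iff) auto

lemma ipS_self_eq_0_iff: "ipS p s s = 0 \<longleftrightarrow> (\<forall>x\<in>grid p. s x = 0)"
  unfolding ipS_def by (subst sum_nonneg_eq_0_iff) (auto simp: add_nonneg_eq_0_iff prod_eq_iff)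

lemma grad_h_eq_0_imp_const:
  assumes grad: "\<forall>x\<in>grid p. grad_h p u x = 0" and "x \<in> grid p"
  shows "u x = u (1, 1)"
proof -
  have step_i: "u (i + 1, j) = u (i, j)" if "1 \<le> i" "i < p" "1 \<le> j" "j \<le> p" for i j
    using grad[rule_format, of "(i, j)"] that by (auto simp: grad_h_def grid_def zero_prod_def)
  have step_j: "u (i, j + 1) = u (i, j)" if "1 \<le> i" "i \<le> p" "1 \<le> j" "j < p" for i j
    using grad[rule_format, of "(i, j)"] that by (auto simp: grad_h_def grid_def zero_prod_def)
  have column: "u (k + 1, j) = u (1, j)" if "k + 1 \<le> p" "1 \<le> j" "j \<le> p" for k j
    using that by (induction k) (auto simp: step_i[symmetric])
  have row: "u (1, k + 1) = u (1, 1)" if "k + 1 \<le> p" for k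
    using that by (induction k) (auto simp: step_j[symmetric])
  obtain i j where "x = (i, j)" "1 \<le> i" "i \<le> p" "1 \<le> j" "j \<le> p"
    using \<open>x \<in> grid p\<close> by (auto simp: grid_def)
  then show ?thesis
    using column[of "i - 1" j] row[of "j - 1"] by simp
qed

lemma meshM_eq_0_if_grad_h_eq_0_sum_eq_0:
  assumes u: "u \<in> meshM p" and "ipS p (grad_h p u) (grad_h p u) = 0" and sum_u: "(\<Sum>x\<in>grid p. u x) = 0"
  shows "u = 0"
proof
  fix x
  have const: "u y = u (1, 1)" if "y \<in> grid p" for y
    using grad_h_eq_0_imp_const that assms(2) by (simp add: ipS_self_eq_0_iff)
  show "u x = 0 x"
  proof (cases "x \<in> grid p")
    case True
    then have "grid p \<noteq> {}" by blast
    moreover have "(\<Sum>y\<in>grid p. u y) = real (card (grid p)) * u (1, 1)"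
      using const by simp
    ultimately show ?thesis
      using sum_u const[OF True] by simp
  qed (simp add: meshM_off_grid[OF u])
qed

lemma lap_h_solvable:
  assumes g: "g \<in> meshM p" and mean_zero: "(\<Sum>x\<in>grid p. g x) = 0"
  shows "\<exists>u\<in>meshM p. (\<lambda>x. - lap_h p u x) = g"
proof -
  \<comment> \<open>Adding the total mass removes the kernel of - Delta_h (the constants); for data of zero
    sum the added term vanishes again, because lap_h has zero sum.\<close>
  define L where "L u = (\<lambda>x. - lap_h p u x + (if x \<in> grid p then (\<Sum>y\<in>grid p. u y) else 0))" for u
  have energy: "ipM p u (L u) = ipS p (grad_h p u) (grad_h p u) + (\<Sum>y\<in>grid p. u y)\<^sup>2" for u
  proof -
    have "ipM p u (L u) = (\<Sum>x\<in>grid p. - (u x * lap_h p u x) + u x * (\<Sum>y\<in>grid p. u y))"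
      unfolding ipM_def by (rule sum.cong) (auto simp: L_def algebra_simps)
    also have "\<dots> = - ipM p u (lap_h p u) + (\<Sum>y\<in>grid p. u y)\<^sup>2"
      by (simp add: ipM_def sum.distrib sum_subtractf sum_negf power2_eq_square sum_distrib_right)
    finally show ?thesis
      by (simp add: ipM_lap_h_self)
  qed
  have bij: "bij_betw L (meshM p) (meshM p)"
  proof (rule linear_bij_betw_finite_support[where S = "grid p", folded meshM_def])
    show "L (u + v) = L u + L v" for u v
      by (auto simp: L_def lap_h_add sum.distrib)
    show "L (\<lambda>x. c * u x) = (\<lambda>x. c * L u x)" for c u
      by (auto simp: L_def lap_h_scale sum_distrib_left algebra_simps)
    show "L ` meshM p \<subseteq> meshM p"
      using lap_h_in_meshM by (auto simp: L_def meshM_def)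
  next
    fix u assume "u \<in> meshM p" and "L u = 0"
    then have "ipS p (grad_h p u) (grad_h p u) + (\<Sum>y\<in>grid p. u y)\<^sup>2 = 0"
      by (simp add: energy[symmetric] ipM_def)
    then have "ipS p (grad_h p u) (grad_h p u) = 0 \<and> (\<Sum>y\<in>grid p. u y) = 0"
      using ipS_self_nonneg[of p "grad_h p u"] by (simp add: add_nonneg_eq_0_iff)
    then show "u = 0"
      using meshM_eq_0_if_grad_h_eq_0_sum_eq_0 \<open>u \<in> meshM p\<close> by blast
  qed simp
  obtain u where u: "u \<in> meshM p" "L u = g"
    using g bij_betw_imp_surj_on[OF bij] by (metis imageE)
  have "(\<Sum>x\<in>grid p. g x) = real (card (grid p)) * (\<Sum>y\<in>grid p. u y)"
    unfolding u(2)[symmetric] by (simp add: L_def sum_subtractf sum_lap_h)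
  then have sum_u: "(\<Sum>y\<in>grid p. u y) = 0"
    using mean_zero by (cases "grid p = {}") auto
  have "(\<lambda>x. - lap_h p u x) = L u"
    using sum_u by (auto simp: L_def fun_eq_iff)
  with u show ?thesis by auto
qed

lemma lap_h_solvable_div_simplex:
  assumes "mu \<in> unit_simplex p" and "nu \<in> unit_simplex p"
  shows "\<exists>u\<in>meshM p. (\<lambda>x. - lap_h p u x) = (\<lambda>x. div_h p s x + mu x - nu x)"
proof (rule lap_h_solvable)
  show "(\<lambda>x. div_h p s x + mu x - nu x) \<in> meshM p"
    using assms div_h_in_meshM[of p s] by (simp add: unit_simplex_def meshM_def)
  show "(\<Sum>x\<in>grid p. div_h p s x + mu x - nu x) = 0"
    using assms by (simp add: unit_simplex_def sum.distrib sum_subtractf sum_div_h)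
qed

lemma resolv_solves:
  assumes "0 < N" and f: "f \<in> meshM p"
  shows "resolv p N f \<in> meshM p" and "(\<lambda>x. resolv p N f x - lap_h p (resolv p N f) x / real N) = f"
proof -
  define L where "L u = (\<lambda>x. u x - lap_h p u x / real N)" for u
  have bij: "bij_betw L (meshM p) (meshM p)"
  proof (rule linear_bij_betw_finite_support[where S = "grid p", folded meshM_def])
    show "L (u + v) = L u + L v" for u v
      by (auto simp: L_def lap_h_add add_divide_distrib)
    show "L (\<lambda>x. c * u x) = (\<lambda>x. c * L u x)" for c u
      by (auto simp: L_def lap_h_scale algebra_simps)
    show "L ` meshM p \<subseteq> meshM p"
      using lap_h_in_meshM by (auto simp: L_def meshM_def)
  next
    fix u assume u: "u \<in> meshM p" and "L u = 0"
    have "ipM p u (L u) = ipM p u u - ipM p u (lap_h p u) / real N"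
      by (simp add: L_def ipM_def right_diff_distrib sum_subtractf sum_divide_distrib)
    also have "\<dots> = ipM p u u + ipS p (grad_h p u) (grad_h p u) / real N"
      by (simp add: ipM_lap_h_self)
    finally have "ipM p u u + ipS p (grad_h p u) (grad_h p u) / real N = 0"
      using \<open>L u = 0\<close> by (simp add: ipM_def)
    then have "ipM p u u = 0"
      using ipM_self_nonneg[of p u] ipS_self_nonneg[of p "grad_h p u"] \<open>0 < N\<close>
      by (simp add: add_nonneg_eq_0_iff)
    then show "u = 0"
      using meshM_off_grid[OF u] by (auto simp: ipM_self_eq_0_iff fun_eq_iff)
  qed simp
  then have "f \<in> L ` meshM p"
    using f by (simp add: bij_betw_def)
  then obtain w where w: "w \<in> meshM p" "L w = f"
    by blast
  have "\<exists>!w. w \<in> meshM p \<and> L w = f"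
  proof (rule ex1I)
    show "w \<in> meshM p \<and> L w = f"
      using w by simp
    show "v = w" if "v \<in> meshM p \<and> L v = f" for v
      using that w inj_onD[OF bij_betw_imp_inj_on[OF bij]] by metis
  qed
  then have "resolv p N f \<in> meshM p \<and> L (resolv p N f) = f"
    unfolding resolv_def L_def by (rule theI')
  then show "resolv p N f \<in> meshM p" and "(\<lambda>x. resolv p N f x - lap_h p (resolv p N f) x / real N) = f"
    by (simp_all add: L_def)
qed

lemma dist2_pythagoras:
  "dist2 p N a z = dist2 p N a y + dist2 p N y z
    + 2 * ((\<Sum>k=1..N. ipS p (fst a k - fst y k) (fst y k - fst z k)) + ipM p (snd a - snd y) (snd y - snd z))"
proof -
  have ipS_split: "ipS p (s - t) (s - t) = ipS p (s - r) (s - r) + ipS p (r - t) (r - t) + 2 * ipS p (s - r) (r - t)"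
    for s r t
    unfolding ipS_def sum_distrib_left sum.distrib[symmetric] by (rule sum.cong) (auto simp: algebra_simps)
  have ipM_split: "ipM p (u - w) (u - w) = ipM p (u - v) (u - v) + ipM p (v - w) (v - w) + 2 * ipM p (u - v) (v - w)"
    for u v w
    unfolding ipM_def sum_distrib_left sum.distrib[symmetric] by (rule sum.cong) (auto simp: algebra_simps)
  have "ipS p (fst a k - fst z k) (fst a k - fst z k) = ipS p (fst a k - fst y k) (fst a k - fst y k)
      + ipS p (fst y k - fst z k) (fst y k - fst z k) + 2 * ipS p (fst a k - fst y k) (fst y k - fst z k)" for k
    by (rule ipS_split)
  then show ?thesis
    unfolding dist2_def ipM_split[of "snd a" "snd z" "snd y"]
    by (simp add: sum.distrib sum_distrib_left algebra_simps)
qed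

lemma dist2_nonneg: "0 \<le> dist2 p N a b"
  unfolding dist2_def by (intro add_nonneg_nonneg sum_nonneg ipS_self_nonneg ipM_self_nonneg)

lemma is_proj_if_orthogonal:
  assumes "y \<in> C"
    and orth: "\<And>z. z \<in> C \<Longrightarrow>
      (\<Sum>k=1..N. ipS p (fst a k - fst y k) (fst y k - fst z k)) + ipM p (snd a - snd y) (snd y - snd z) = 0"
  shows "is_proj p N C a y"
  unfolding is_proj_def
proof (intro conjI ballI)
  show "y \<in> C" by fact
  fix z assume "z \<in> C"
  then have "dist2 p N a z = dist2 p N a y + dist2 p N y z"
    using dist2_pythagoras[of p N a z y] orth[OF \<open>z \<in> C\<close>] by simp
  then show "dist2 p N a y \<le> dist2 p N a z"
    using dist2_nonneg[of p N y z] by simp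
qed

lemma is_proj_Fh_if_gradient_form:
  fixes p N :: nat and sigma :: "nat \<Rightarrow> nat \<times> nat \<Rightarrow> real \<times> real"
    and nu :: "nat \<times> nat \<Rightarrow> real" and xi :: "nat \<Rightarrow> nat \<times> nat \<Rightarrow> real"
  defines "y \<equiv> (\<lambda>i x. sigma i x + grad_h p (xi i) x, \<lambda>x. nu x + (\<Sum>j=1..N. xi j x))"
  assumes y_in: "y \<in> Fh p N nus"
  shows "is_proj p N (Fh p N nus) (sigma, nu) y"
proof (rule is_proj_if_orthogonal[OF y_in])
  fix z assume "z \<in> Fh p N nus"
  then obtain t m where z: "z = (t, m)" and t: "\<And>k. k \<in> {1..N} \<Longrightarrow> div_h p (t k) + nus k = m"
    by (cases z) (auto simp: Fh_def plus_fun_def)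
  have y: "div_h p (fst y k) + nus k = snd y" if "k \<in> {1..N}" for k
    using y_in that by (auto simp: Fh_def plus_fun_def)
  define E where "E = snd y - m"
  have div_E: "div_h p (fst y k - t k) = E" if "k \<in> {1..N}" for k
    using y[OF that] t[OF that] by (simp add: E_def div_h_diff flip: eq_diff_eq)
  have "ipS p (sigma k - fst y k) (fst y k - t k) = ipM p (xi k) E" if "k \<in> {1..N}" for k
  proof -
    have "ipS p (sigma k - fst y k) (fst y k - t k) = - ipS p (grad_h p (xi k)) (fst y k - t k)"
      by (simp add: ipS_def y_def sum_negf[symmetric])
    then show ?thesis
      by (simp add: grad_h_adjoint div_E[OF that])
  qed
  moreover have "ipM p (nu - snd y) (snd y - m) = - (\<Sum>k=1..N. ipM p (xi k) E)"
    by (simp add: ipM_def y_def E_def sum_distrib_right sum_negf[symmetric] sum.swap[of _ "grid p"])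
  ultimately show "(\<Sum>k=1..N. ipS p (fst (sigma, nu) k - fst y k) (fst y k - fst z k))
      + ipM p (snd (sigma, nu) - snd y) (snd y - snd z) = 0"
    by (simp add: z)
qed

lemma gradient_correction_in_Fh:
  fixes p N :: nat and sigma :: "nat \<Rightarrow> nat \<times> nat \<Rightarrow> real \<times> real"
    and nu :: "nat \<times> nat \<Rightarrow> real" and xi' :: "nat \<Rightarrow> nat \<times> nat \<Rightarrow> real"
  assumes "0 < N" and sigma: "\<forall>k\<in>{1..N}. sigma k \<in> meshS p" and nu: "nu \<in> meshM p"
    and xi': "\<forall>k\<in>{1..N}. xi' k \<in> meshM p \<and>
      (\<lambda>x. - lap_h p (xi' k) x) = (\<lambda>x. div_h p (sigma k) x + nus k x - nu x)"
  defines "W \<equiv> resolv p N (\<lambda>y. (\<Sum>j=1..N. xi' j y) / real N)"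
  shows "(\<lambda>i x. sigma i x + grad_h p (\<lambda>x. xi' i x - W x) x,
          \<lambda>x. nu x + (\<Sum>j=1..N. xi' j x - W x)) \<in> Fh p N nus"
proof -
  have "(\<lambda>y. (\<Sum>j=1..N. xi' j y) / real N) \<in> meshM p"
    using xi' by (simp add: meshM_def)
  then have W: "W \<in> meshM p" and W_eq: "(\<lambda>x. W x - lap_h p W x / real N) = (\<lambda>y. (\<Sum>j=1..N. xi' j y) / real N)"
    unfolding W_def using resolv_solves[OF \<open>0 < N\<close>] by blast+
  have sum_xi: "(\<Sum>j=1..N. xi' j x - W x) = - lap_h p W x" for x
    using fun_cong[OF W_eq, of x] \<open>0 < N\<close> by (simp add: sum_subtractf field_simps)
  have lap_xi': "lap_h p (xi' k) x = nu x - nus k x - div_h p (sigma k) x" if "k \<in> {1..N}" for k x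
    using fun_cong[OF conjunct2[OF xi'[rule_format, OF that]], of x] by simp
  have "div_h p (\<lambda>x. sigma k x + grad_h p (\<lambda>x. xi' k x - W x) x) x + nus k x
      = nu x + (\<Sum>j=1..N. xi' j x - W x)" if "k \<in> {1..N}" for k x
  proof -
    have "div_h p (\<lambda>x. sigma k x + grad_h p (\<lambda>x. xi' k x - W x) x) x
        = div_h p (sigma k) x + lap_h p (xi' k) x - lap_h p W x"
      using div_h_add[of p "sigma k"] lap_h_diff[of p "xi' k" W]
      by (simp add: plus_fun_def fun_diff_def lap_h_def)
    then show ?thesis
      using lap_xi'[OF that] sum_xi by simp
  qed
  moreover have "(\<lambda>x. sigma k x + grad_h p (\<lambda>x. xi' k x - W x) x) \<in> meshS p" if "k \<in> {1..N}" for k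
    using sigma that grad_h_in_meshS by (simp add: meshS_def)
  moreover have "(\<lambda>x. nu x + (\<Sum>j=1..N. xi' j x - W x)) \<in> meshM p"
  proof -
    have "xi' j x = 0" if "j \<in> {1..N}" "x \<notin> grid p" for j x
      using xi' that meshM_off_grid by blast
    then show ?thesis
      using meshM_off_grid[OF nu] meshM_off_grid[OF W] by (simp add: meshM_def)
  qed
  ultimately show ?thesis
    by (simp add: Fh_def)
qed

theorem proposition7p1:
  fixes p N :: nat
    and nus :: "nat \<Rightarrow> nat \<times> nat \<Rightarrow> real"
    and sigma :: "nat \<Rightarrow> nat \<times> nat \<Rightarrow> real \<times> real"
    and nu :: "nat \<times> nat \<Rightarrow> real"
  assumes "1 \<le> p" and "2 \<le> N"
    and "\<forall>k\<in>{1..N}. nus k \<in> unit_simplex p"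
    and "\<forall>k\<in>{1..N}. sigma k \<in> meshS p"
    and "nu \<in> unit_simplex p"
  shows "(\<forall>i\<in>{1..N}. \<exists>xi' \<in> meshM p.
            (\<lambda>x. - lap_h p xi' x) = (\<lambda>x. div_h p (sigma i) x + nus i x - nu x))
       \<and> (\<forall>xi' :: nat \<Rightarrow> nat \<times> nat \<Rightarrow> real.
            (\<forall>i\<in>{1..N}. xi' i \<in> meshM p \<and>
               (\<lambda>x. - lap_h p (xi' i) x) = (\<lambda>x. div_h p (sigma i) x + nus i x - nu x))
            \<longrightarrow> (let xi = (\<lambda>i x. xi' i x - resolv p N (\<lambda>y. (\<Sum>j=1..N. xi' j y) / real N) x)
                 in is_proj p N (Fh p N nus) (sigma, nu)
                      (\<lambda>i x. sigma i x + grad_h p (xi i) x,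
                       \<lambda>x. nu x + (\<Sum>j=1..N. xi j x))))"
proof (intro conjI ballI allI impI)
  fix i assume "i \<in> {1..N}"
  then show "\<exists>xi' \<in> meshM p. (\<lambda>x. - lap_h p xi' x) = (\<lambda>x. div_h p (sigma i) x + nus i x - nu x)"
    using assms(3,5) by (intro lap_h_solvable_div_simplex) auto
next
  fix xi' :: "nat \<Rightarrow> nat \<times> nat \<Rightarrow> real"
  define W where "W = resolv p N (\<lambda>y. (\<Sum>j=1..N. xi' j y) / real N)"
  assume "\<forall>i\<in>{1..N}. xi' i \<in> meshM p \<and>
    (\<lambda>x. - lap_h p (xi' i) x) = (\<lambda>x. div_h p (sigma i) x + nus i x - nu x)"
  then have "(\<lambda>i x. sigma i x + grad_h p (\<lambda>x. xi' i x - W x) x,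
      \<lambda>x. nu x + (\<Sum>j=1..N. xi' j x - W x)) \<in> Fh p N nus"
    unfolding W_def using assms(2,4,5) by (intro gradient_correction_in_Fh) (auto simp: unit_simplex_def)
  then show "let xi = (\<lambda>i x. xi' i x - resolv p N (\<lambda>y. (\<Sum>j=1..N. xi' j y) / real N) x)
      in is_proj p N (Fh p N nus) (sigma, nu) (\<lambda>i x. sigma i x + grad_h p (xi i) x, \<lambda>x. nu x + (\<Sum>j=1..N. xi j x))"
    unfolding Let_def W_def[symmetric] by (rule is_proj_Fh_if_gradient_form[where xi = "\<lambda>i x. xi' i x - W x"])
qed

end
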